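(* Let $t\geq 2$ be an integer and $f:\mathbb{N}\to\mathbb{N}$ with $\lim_{n\to\infty}f(n)=\infty$. Then there is a constant $C$ (depending only on $t$ and $f$) such that for every $n$ and every set $\mathcal{A}\subseteq\{0,1\}^n$ with $|\mathcal{A}|=f(n)$, there is a first-order sentence over $\tau_{\mathsf{string}}$ with at most $3\log_3(n)+\log_t(f(n))+C$ quantifiers that is true in $\mathbf{B}_w$ for all $w\in\mathcal{A}$ and false in $\mathbf{B}_{w'}$ for all $w'\in\{0,1\}^n\setminus\mathcal{A}$.
   Context: Vocabulary $\tau_{\mathsf{string}}=\langle <, S;\ \mathsf{min},\mathsf{max}\rangle$ with $<$ binary, $S$ unary, $\mathsf{min},\mathsf{max}$ constants. A string $w=w_1\cdots w_n\in\{0,1\}^n$ ($n\geq 1$) is encoded by the structure $\mathbf{B}_w$ with universe $\{1,\dots,n\}$, $<$ the usual order, $S=\{i: w_i=1\}$, $\mathsf{min}=1$, $\mathsf{max}=n$. The number of quantifiers is the number of quantifier occurrences. *)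

theory Defs
  imports Complex_Main
begin

datatype fterm = Var nat | Min | Max

datatype fform =
    FTrue | FFalse
  | Eq fterm fterm
  | Less fterm fterm
  | S fterm
  | Neg fform
  | Conj fform fform
  | Disj fform fform
  | Impl fform fform
  | Ex nat fform
  | All nat fform

fun tvars :: "fterm \<Rightarrow> nat set" where
  "tvars (Var x) = {x}"
| "tvars Min = {}"
| "tvars Max = {}"

fun free_vars :: "fform \<Rightarrow> nat set" where
  "free_vars FTrue = {}"
| "free_vars FFalse = {}"
| "free_vars (Eq a b) = tvars a \<union> tvars b"
| "free_vars (Less a b) = tvars a \<union> tvars b"
| "free_vars (S a) = tvars a"
| "free_vars (Neg p) = free_vars p"
| "free_vars (Conj p q) = free_vars p \<union> free_vars q"
| "free_vars (Disj p q) = free_vars p \<union> free_vars q"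
| "free_vars (Impl p q) = free_vars p \<union> free_vars q"
| "free_vars (Ex x p) = free_vars p - {x}"
| "free_vars (All x p) = free_vars p - {x}"

definition sentence :: "fform \<Rightarrow> bool" where
  "sentence p \<longleftrightarrow> free_vars p = {}"

fun qcount :: "fform \<Rightarrow> nat" where
  "qcount FTrue = 0"
| "qcount FFalse = 0"
| "qcount (Eq a b) = 0"
| "qcount (Less a b) = 0"
| "qcount (S a) = 0"
| "qcount (Neg p) = qcount p"
| "qcount (Conj p q) = qcount p + qcount q"
| "qcount (Disj p q) = qcount p + qcount q"
| "qcount (Impl p q) = qcount p + qcount q"
| "qcount (Ex x p) = Suc (qcount p)"
| "qcount (All x p) = Suc (qcount p)"

text \<open>The structure B_w for w = w_1...w_n (a bool list of length n, True = 1):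
  universe {1..n}, usual order, S = {i. w_i = 1}, min = 1, max = n.\<close>

fun teval :: "bool list \<Rightarrow> (nat \<Rightarrow> nat) \<Rightarrow> fterm \<Rightarrow> nat" where
  "teval w \<sigma> (Var x) = \<sigma> x"
| "teval w \<sigma> Min = 1"
| "teval w \<sigma> Max = length w"

fun sat :: "bool list \<Rightarrow> (nat \<Rightarrow> nat) \<Rightarrow> fform \<Rightarrow> bool" where
  "sat w \<sigma> FTrue = True"
| "sat w \<sigma> FFalse = False"
| "sat w \<sigma> (Eq a b) = (teval w \<sigma> a = teval w \<sigma> b)"
| "sat w \<sigma> (Less a b) = (teval w \<sigma> a < teval w \<sigma> b)"
| "sat w \<sigma> (S a) = (let i = teval w \<sigma> a in 1 \<le> i \<and> i \<le> length w \<and> w ! (i - 1))"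
| "sat w \<sigma> (Neg p) = (\<not> sat w \<sigma> p)"
| "sat w \<sigma> (Conj p q) = (sat w \<sigma> p \<and> sat w \<sigma> q)"
| "sat w \<sigma> (Disj p q) = (sat w \<sigma> p \<or> sat w \<sigma> q)"
| "sat w \<sigma> (Impl p q) = (sat w \<sigma> p \<longrightarrow> sat w \<sigma> q)"
| "sat w \<sigma> (Ex x p) = (\<exists>i\<in>{1..length w}. sat w (\<sigma>(x := i)) p)"
| "sat w \<sigma> (All x p) = (\<forall>i\<in>{1..length w}. sat w (\<sigma>(x := i)) p)"

text \<open>Truth of a sentence in B_w (evaluated under a dummy assignment into the universe;
  irrelevant for sentences).\<close>
definition holds :: "bool list \<Rightarrow> fform \<Rightarrow> bool" where
  "holds w p \<longleftrightarrow> sat w (\<lambda>_. 1) p"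

end

theory Submission
  imports Defs
begin

text \<open>A word of length n is pinned down by ternary divide and conquer: existentially guess two
  cut points splitting the current window into thirds, universally choose one of the three
  subwindows by its left end, and recurse. All windows of one depth share these three
  quantifiers, so comparing a word with a pattern costs 3 log_3 n + O(1) quantifiers. The
  pattern is quantifier-free in selector variables: t - 1 increasing positions, together with
  min, name the digits 0, ..., t - 1, and log_t |A| + 1 further variables spell the base-t
  index of a word of A, whose letters the pattern then reads off. For n < t a disjunction over
  the at most 2^t words of A has bounded cost.\<close>

lemma teval_cong:
  "(\<forall>x\<in>tvars t. \<sigma> x = \<sigma>' x) \<Longrightarrow> teval w \<sigma> t = teval w \<sigma>' t"
  by (cases t) auto

lemma sat_cong:
  "(\<forall>x\<in>free_vars p. \<sigma> x = \<sigma>' x) \<Longrightarrow> sat w \<sigma> p = sat w \<sigma>' p"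
proof (induction p arbitrary: \<sigma> \<sigma>')
  case (Eq a b)
  then show ?case using teval_cong[of a \<sigma> \<sigma>' w] teval_cong[of b \<sigma> \<sigma>' w] by auto
next
  case (Less a b)
  then show ?case using teval_cong[of a \<sigma> \<sigma>' w] teval_cong[of b \<sigma> \<sigma>' w] by auto
next
  case (S a)
  then show ?case using teval_cong[of a \<sigma> \<sigma>' w] by (auto simp: Let_def)
next
  case (Ex x p)
  have "\<And>i. sat w (\<sigma>(x:=i)) p = sat w (\<sigma>'(x:=i)) p" using Ex by (intro Ex.IH) auto
  then show ?case by simp
next
  case (All x p)
  have "\<And>i. sat w (\<sigma>(x:=i)) p = sat w (\<sigma>'(x:=i)) p" using All by (intro All.IH) auto
  then show ?case by simp
next
  case (Neg p)
  then show ?case by simp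
next
  case (Conj p q)
  then have "sat w \<sigma> p = sat w \<sigma>' p" "sat w \<sigma> q = sat w \<sigma>' q" by auto
  then show ?case by simp
next
  case (Disj p q)
  then have "sat w \<sigma> p = sat w \<sigma>' p" "sat w \<sigma> q = sat w \<sigma>' q" by auto
  then show ?case by simp
next
  case (Impl p q)
  then have "sat w \<sigma> p = sat w \<sigma>' p" "sat w \<sigma> q = sat w \<sigma>' q" by auto
  then show ?case by simp
qed auto

definition Iff :: "fform \<Rightarrow> fform \<Rightarrow> fform" where
  "Iff p q = Conj (Impl p q) (Impl q p)"

fun Disjs :: "fform list \<Rightarrow> fform" where
  "Disjs [] = FFalse" | "Disjs (p#ps) = Disj p (Disjs ps)"
fun Conjs :: "fform list \<Rightarrow> fform" where
  "Conjs [] = FTrue" | "Conjs (p#ps) = Conj p (Conjs ps)"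
fun Exs :: "nat list \<Rightarrow> fform \<Rightarrow> fform" where
  "Exs [] p = p" | "Exs (v#vs) p = Ex v (Exs vs p)"

lemma sat_Iff[simp]: "sat w \<sigma> (Iff p q) = (sat w \<sigma> p = sat w \<sigma> q)"
  by (auto simp: Iff_def)
lemma free_vars_Iff[simp]: "free_vars (Iff p q) = free_vars p \<union> free_vars q"
  by (auto simp: Iff_def)
lemma qcount_Iff[simp]: "qcount (Iff p q) = 2 * (qcount p + qcount q)"
  by (auto simp: Iff_def)
lemma sat_Disjs[simp]: "sat w \<sigma> (Disjs ps) = (\<exists>p\<in>set ps. sat w \<sigma> p)"
  by (induction ps) auto
lemma sat_Conjs[simp]: "sat w \<sigma> (Conjs ps) = (\<forall>p\<in>set ps. sat w \<sigma> p)"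
  by (induction ps) auto
lemma free_vars_Disjs[simp]: "free_vars (Disjs ps) = (\<Union>p\<in>set ps. free_vars p)"
  by (induction ps) auto
lemma free_vars_Conjs[simp]: "free_vars (Conjs ps) = (\<Union>p\<in>set ps. free_vars p)"
  by (induction ps) auto
lemma qcount_Disjs[simp]: "qcount (Disjs ps) = sum_list (map qcount ps)"
  by (induction ps) auto
lemma qcount_Conjs[simp]: "qcount (Conjs ps) = sum_list (map qcount ps)"
  by (induction ps) auto
lemma qcount_Exs[simp]: "qcount (Exs vs p) = length vs + qcount p"
  by (induction vs) auto
lemma free_vars_Exs: "free_vars (Exs vs p) = free_vars p - set vs"
  by (induction vs) auto

lemma sat_Exs:
  "sat w \<sigma> (Exs vs p) \<longleftrightarrow>
    (\<exists>\<tau>. (\<forall>v. v \<notin> set vs \<longrightarrow> \<tau> v = \<sigma> v) \<and> (\<forall>v\<in>set vs. \<tau> v \<in> {1..length w}) \<and> sat w \<tau> p)"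
proof (induction vs arbitrary: \<sigma>)
  case Nil
  then show ?case by (auto intro!: exI[of _ \<sigma>] simp: sat_cong) (metis ext)
next
  case (Cons v vs)
  show ?case
  proof
    assume "sat w \<sigma> (Exs (v # vs) p)"
    then obtain i where i: "i \<in> {1..length w}" "sat w (\<sigma>(v := i)) (Exs vs p)" by auto
    then obtain \<tau> where \<tau>: "\<forall>u. u \<notin> set vs \<longrightarrow> \<tau> u = (\<sigma>(v := i)) u"
      "\<forall>u\<in>set vs. \<tau> u \<in> {1..length w}" "sat w \<tau> p"
      using Cons.IH by blast
    have "\<tau> v \<in> {1..length w}" using i(1) \<tau>(1,2) by (cases "v \<in> set vs") auto
    then show "\<exists>\<tau>. (\<forall>u. u \<notin> set (v # vs) \<longrightarrow> \<tau> u = \<sigma> u) \<and>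
        (\<forall>u\<in>set (v # vs). \<tau> u \<in> {1..length w}) \<and> sat w \<tau> p"
      using \<tau> by (intro exI[of _ \<tau>]) auto
  next
    assume "\<exists>\<tau>. (\<forall>u. u \<notin> set (v # vs) \<longrightarrow> \<tau> u = \<sigma> u) \<and>
        (\<forall>u\<in>set (v # vs). \<tau> u \<in> {1..length w}) \<and> sat w \<tau> p"
    then obtain \<tau> where \<tau>: "\<forall>u. u \<notin> set (v # vs) \<longrightarrow> \<tau> u = \<sigma> u"
      "\<forall>u\<in>set (v # vs). \<tau> u \<in> {1..length w}" "sat w \<tau> p"
      by blast
    have "sat w (\<sigma>(v := \<tau> v)) (Exs vs p)"
      unfolding Cons.IH using \<tau> by (intro exI[of _ \<tau>]) auto
    then show "sat w \<sigma> (Exs (v # vs) p)" using \<tau>(2) by auto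
  qed
qed

text \<open>Depth d of the recursion uses the even variables 6d+2 and 6d+4 for the two cut points and
  6d+6 for the left end of the chosen subwindow, which becomes the left end at depth d+1; pattern
  formulas use only odd variables. A window whose guard holds spans the positions from left_end d
  to its right end and must spell the pattern on pat_lo..pat_hi.\<close>

datatype window = Window (guard: fform) (right_end: fterm) (pat_lo: nat) (pat_hi: nat)

definition left_end :: "nat \<Rightarrow> fterm" where "left_end d = (if d = 0 then Min else Var (6*d))"

text \<open>The universally quantified a, which otherwise
  picks the subwindow to descend into, here witnesses that no position (resp. only z1) lies
  strictly inside the window, so the leaves cost no extra quantifier.\<close>

definition window_check :: "(nat \<Rightarrow> fform) \<Rightarrow> nat \<Rightarrow> window \<Rightarrow> fform" where
"window_check \<beta> d c = (let a = left_end d; e = right_end c; z1 = Var (6*d+2); z2 = Var (6*d+4);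
     a' = Var (6*d+6); L = pat_hi c - pat_lo c in
   if L = 0 then Conj (Eq a e) (Iff (S a) (\<beta> (pat_lo c)))
   else if L = 1 then Conjs [Less a e, Neg (Conj (Less a a') (Less a' e)), Iff (S a) (\<beta> (pat_lo c)),
      Iff (S e) (\<beta> (pat_hi c))]
   else if L = 2 then Conjs [Less a z1, Less z1 e, Impl (Conj (Less a a') (Less a' e)) (Eq a' z1),
      Iff (S a) (\<beta> (pat_lo c)), Iff (S z1) (\<beta> (pat_lo c + 1)), Iff (S e) (\<beta> (pat_hi c))]
   else Conjs [Less a z1, Less z1 z2, Less z2 e])"

definition splittable :: "window \<Rightarrow> bool" where "splittable c \<longleftrightarrow> 3 \<le> pat_hi c - pat_lo c"

definition cut1 :: "window \<Rightarrow> nat" where "cut1 c = pat_lo c + (pat_hi c - pat_lo c) div 3"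
definition cut2 :: "window \<Rightarrow> nat" where "cut2 c = cut1 c + (pat_hi c - pat_lo c + 1) div 3"

definition subwindows :: "nat \<Rightarrow> window \<Rightarrow> window list" where
"subwindows d c =
  [Window (Conj (guard c) (Eq (Var (6*d+6)) (left_end d))) (Var (6*d+2)) (pat_lo c) (cut1 c),
   Window (Conj (guard c) (Eq (Var (6*d+6)) (Var (6*d+2)))) (Var (6*d+4)) (cut1 c) (cut2 c),
   Window (Conj (guard c) (Eq (Var (6*d+6)) (Var (6*d+4)))) (right_end c) (cut2 c) (pat_hi c)]"

definition next_windows :: "nat \<Rightarrow> window list \<Rightarrow> window list" where
"next_windows d ws = concat (map (subwindows d) (filter splittable ws))"

definition window_checks :: "(nat \<Rightarrow> fform) \<Rightarrow> nat \<Rightarrow> window list \<Rightarrow> fform" where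
"window_checks \<beta> d ws = Disjs (map (\<lambda>c. Conj (guard c) (window_check \<beta> d c)) ws)"

definition descend :: "nat \<Rightarrow> window list \<Rightarrow> fform" where
"descend d ws = Conj (Disjs (map guard (filter splittable ws)))
   (Disjs [Eq (Var (6*d+6)) (left_end d), Eq (Var (6*d+6)) (Var (6*d+2)), Eq (Var (6*d+6)) (Var (6*d+4))])"

fun match_formula :: "(nat \<Rightarrow> fform) \<Rightarrow> nat \<Rightarrow> nat \<Rightarrow> window list \<Rightarrow> fform" where
"match_formula \<beta> 0 d ws = Ex (6*d+2) (Ex (6*d+4) (All (6*d+6) (window_checks \<beta> d ws)))"
| "match_formula \<beta> (Suc k) d ws = Ex (6*d+2) (Ex (6*d+4) (All (6*d+6)
      (Conj (window_checks \<beta> d ws) (Impl (descend d ws) (match_formula \<beta> k (d+1) (next_windows d ws))))))"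

definition one_at :: "bool list \<Rightarrow> nat \<Rightarrow> bool" where
"one_at w p \<longleftrightarrow> 1 \<le> p \<and> p \<le> length w \<and> w ! (p - 1)"

definition matches :: "bool list \<Rightarrow> (nat \<Rightarrow> bool) \<Rightarrow> nat \<Rightarrow> nat \<Rightarrow> nat \<Rightarrow> nat \<Rightarrow> bool" where
"matches w B lo hi x y \<longleftrightarrow> y = x + (hi - lo) \<and> (\<forall>i\<le>hi - lo. one_at w (x+i) = B (lo+i))"

abbreviation at_level :: "(nat \<Rightarrow> nat) \<Rightarrow> nat \<Rightarrow> nat \<Rightarrow> nat \<Rightarrow> nat \<Rightarrow> nat \<Rightarrow> nat" where
"at_level \<sigma> d z1 z2 a \<equiv> \<sigma>(6*d+2 := z1, 6*d+4 := z2, 6*d+6 := a)"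

abbreviation windows_below :: "nat \<Rightarrow> window list \<Rightarrow> bool" where
"windows_below d ws \<equiv>
   \<forall>c\<in>set ws. free_vars (guard c) \<subseteq> {x. x \<le> 6*d} \<and> tvars (right_end c) \<subseteq> {x. x \<le> 6*d}"

abbreviation windows_short :: "nat \<Rightarrow> window list \<Rightarrow> bool" where
"windows_short k ws \<equiv> \<forall>c\<in>set ws. pat_lo c \<le> pat_hi c \<and> pat_hi c - pat_lo c \<le> 2 * 3^k"

abbreviation active :: "bool list \<Rightarrow> (nat \<Rightarrow> nat) \<Rightarrow> window list \<Rightarrow> window \<Rightarrow> bool" where
"active w \<sigma> ws c \<equiv> c \<in> set ws \<and> sat w \<sigma> (guard c) \<and> (\<forall>c'\<in>set ws. sat w \<sigma> (guard c') \<longrightarrow> c' = c)"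

lemma sat_S [simp]: "sat w \<sigma> (S a) = one_at w (teval w \<sigma> a)"
  by (simp add: one_at_def Let_def)

lemma teval_range:
  assumes "\<forall>x. \<sigma> x \<in> {1..length w}"
  shows "teval w \<sigma> t \<in> {1..length w}"
proof -
  have "1 \<le> length w" using assms by (meson atLeastAtMost_iff order_trans)
  then show ?thesis using assms by (cases t) auto
qed

lemma sum_list_qcount_eq_0: "(\<forall>x\<in>set xs. qcount x = 0) \<Longrightarrow> sum_list (map qcount xs) = 0"
  by (induction xs) auto

lemma qcount_window_check: "(\<forall>p. qcount (\<beta> p) = 0) \<Longrightarrow> qcount (window_check \<beta> d c) = 0"
  by (simp add: window_check_def Let_def)

lemma qcount_match_formula:
  "(\<forall>p. qcount (\<beta> p) = 0) \<Longrightarrow> (\<forall>c\<in>set ws. qcount (guard c) = 0) \<Longrightarrow>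
   qcount (match_formula \<beta> k d ws) = 3 * (k+1)"
proof (induction k arbitrary: d ws)
  case 0
  then show ?case
    by (simp add: window_checks_def o_def sum_list_qcount_eq_0 qcount_window_check)
next
  case (Suc k)
  have "\<forall>c\<in>set (next_windows d ws). qcount (guard c) = 0"
    using Suc.prems by (auto simp: next_windows_def subwindows_def)
  then show ?case
    using Suc by (simp add: window_checks_def descend_def o_def sum_list_qcount_eq_0 qcount_window_check)
qed

lemma free_vars_window_check:
  assumes "\<forall>q. free_vars (\<beta> q) \<subseteq> U"
  shows "free_vars (window_check \<beta> d c) \<subseteq>
    U \<union> tvars (right_end c) \<union> tvars (left_end d) \<union> {6*d+2, 6*d+4, 6*d+6}"
  using assms unfolding window_check_def Let_def by (simp; blast)

lemma free_vars_window_checks: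
  assumes "\<forall>q. free_vars (\<beta> q) \<subseteq> U"
  shows "free_vars (window_checks \<beta> d ws) \<subseteq>
    U \<union> (\<Union>c\<in>set ws. free_vars (guard c) \<union> tvars (right_end c)) \<union> tvars (left_end d) \<union> {6*d+2, 6*d+4, 6*d+6}"
  unfolding window_checks_def using free_vars_window_check[OF assms] by fastforce

lemma free_vars_match_formula:
  assumes "\<forall>q. free_vars (\<beta> q) \<subseteq> U"
  shows "free_vars (match_formula \<beta> k d ws) \<subseteq>
    U \<union> (\<Union>c\<in>set ws. free_vars (guard c) \<union> tvars (right_end c)) \<union> tvars (left_end d)"
proof (induction k arbitrary: d ws)
  case 0
  then show ?case using free_vars_window_checks[OF assms, of d ws] by auto
next
  case (Suc k)
  have step: "(\<Union>c\<in>set (next_windows d ws). free_vars (guard c) \<union> tvars (right_end c)) \<union> tvars (left_end (d+1)) \<subseteq>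
     (\<Union>c\<in>set ws. free_vars (guard c) \<union> tvars (right_end c)) \<union> tvars (left_end d) \<union> {6*d+2, 6*d+4, 6*d+6}"
    unfolding next_windows_def subwindows_def by (auto simp: left_end_def)
  have "free_vars (match_formula \<beta> k (d+1) (next_windows d ws)) \<subseteq>
      U \<union> (\<Union>c\<in>set ws. free_vars (guard c) \<union> tvars (right_end c)) \<union> tvars (left_end d) \<union> {6*d+2, 6*d+4, 6*d+6}"
    by (rule order_trans[OF Suc.IH]) (use step in auto)
  moreover have "free_vars (descend d ws) \<subseteq>
      (\<Union>c\<in>set ws. free_vars (guard c) \<union> tvars (right_end c)) \<union> tvars (left_end d) \<union> {6*d+2, 6*d+4, 6*d+6}"
    unfolding descend_def by auto
  ultimately show ?case using free_vars_window_checks[OF assms, of d ws] by auto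
qed

lemma free_vars_match_formula_root:
  "(\<forall>p. free_vars (\<beta> p) \<subseteq> V) \<Longrightarrow> free_vars (match_formula \<beta> k 0 [Window FTrue Max 1 n]) \<subseteq> V"
  using free_vars_match_formula[of \<beta> V k 0 "[Window FTrue Max 1 n]"] by (auto simp: left_end_def)

lemma matches_split:
  assumes "lo \<le> s" "s \<le> hi"
  shows "(matches w B lo s x z \<and> matches w B s hi z y) \<longleftrightarrow> (matches w B lo hi x y \<and> z = x + (s - lo))"
proof
  assume A: "matches w B lo s x z \<and> matches w B s hi z y"
  then have z: "z = x + (s - lo)" and y: "y = x + (hi - lo)" using assms by (auto simp: matches_def)
  have "\<forall>i\<le>hi - lo. one_at w (x+i) = B (lo+i)"
  proof (intro allI impI)
    fix i assume i: "i \<le> hi - lo"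
    show "one_at w (x+i) = B (lo+i)"
    proof (cases "i \<le> s - lo")
      case True then show ?thesis using A by (auto simp: matches_def)
    next
      case False
      define j where "j = i - (s - lo)"
      have j: "i = (s - lo) + j" "j \<le> hi - s" using i assms False unfolding j_def by linarith+
      have "one_at w (z+j) = B (s+j)" using A j by (auto simp: matches_def)
      then show ?thesis using z j assms by (simp add: add.assoc)
    qed
  qed
  then show "matches w B lo hi x y \<and> z = x + (s - lo)" using y z by (simp add: matches_def)
next
  assume A: "matches w B lo hi x y \<and> z = x + (s - lo)"
  have "\<forall>j\<le>hi - s. one_at w (z+j) = B (s+j)"
  proof (intro allI impI)
    fix j assume "j \<le> hi - s"
    then have "s - lo + j \<le> hi - lo" using assms by linarith
    then have "one_at w (x + (s - lo + j)) = B (lo + (s - lo + j))" using A by (auto simp: matches_def)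
    then show "one_at w (z+j) = B (s+j)" using A assms by (simp add: add.assoc)
  qed
  then show "matches w B lo s x z \<and> matches w B s hi z y" using A assms by (auto simp: matches_def)
qed

lemma matches_split3:
  assumes "lo < s1" "s1 < s2" "s2 < hi" "1 \<le> x" "y \<le> n"
  shows "(\<exists>z1\<in>{1..n}. \<exists>z2\<in>{1..n}. x < z1 \<and> z1 < z2 \<and> z2 < y \<and>
           matches w B lo s1 x z1 \<and> matches w B s1 s2 z1 z2 \<and> matches w B s2 hi z2 y)
         \<longleftrightarrow> matches w B lo hi x y"
proof
  assume "\<exists>z1\<in>{1..n}. \<exists>z2\<in>{1..n}. x < z1 \<and> z1 < z2 \<and> z2 < y \<and>
           matches w B lo s1 x z1 \<and> matches w B s1 s2 z1 z2 \<and> matches w B s2 hi z2 y"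
  then obtain z1 z2 where h: "matches w B lo s1 x z1" "matches w B s1 s2 z1 z2" "matches w B s2 hi z2 y"
    by blast
  then have "matches w B lo s2 x z2" using matches_split[of lo s1 s2 w B x z1 z2] assms by auto
  then show "matches w B lo hi x y" using h(3) matches_split[of lo s2 hi w B x z2 y] assms by auto
next
  assume A: "matches w B lo hi x y"
  define z1 where "z1 = x + (s1 - lo)"
  define z2 where "z2 = x + (s2 - lo)"
  have y: "y = x + (hi - lo)" using A by (simp add: matches_def)
  have h2: "matches w B lo s2 x z2" "matches w B s2 hi z2 y"
    using A matches_split[of lo s2 hi w B x z2 y] assms z2_def by auto
  have h1: "matches w B lo s1 x z1" "matches w B s1 s2 z1 z2"
    using h2(1) matches_split[of lo s1 s2 w B x z1 z2] assms z1_def z2_def by auto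
  show "\<exists>z1\<in>{1..n}. \<exists>z2\<in>{1..n}. x < z1 \<and> z1 < z2 \<and> z2 < y \<and>
           matches w B lo s1 x z1 \<and> matches w B s1 s2 z1 z2 \<and> matches w B s2 hi z2 y"
    using h1 h2 assms y unfolding z1_def z2_def
    by (intro bexI[of _ "x + (s1 - lo)"] bexI[of _ "x + (s2 - lo)"]) auto
qed

lemma matches_whole_word:
  assumes "1 \<le> length w"
  shows "matches w B 1 (length w) 1 (length w) \<longleftrightarrow> (\<forall>p\<in>{1..length w}. w ! (p - 1) = B p)"
proof -
  have shift: "(\<forall>i\<le>length w - 1. P (1 + i)) \<longleftrightarrow> (\<forall>p\<in>{1..length w}. P p)" for P
  proof
    assume all: "\<forall>i\<le>length w - 1. P (1 + i)"
    show "\<forall>p\<in>{1..length w}. P p"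
    proof
      fix p assume "p \<in> {1..length w}"
      then have "p = 1 + (p - 1)" "p - 1 \<le> length w - 1" by auto
      then show "P p" using all by metis
    qed
  qed (use assms in auto)
  have "matches w B 1 (length w) 1 (length w) \<longleftrightarrow> (\<forall>i\<le>length w - 1. one_at w (1 + i) = B (1 + i))"
    using assms by (auto simp: matches_def)
  also have "\<dots> \<longleftrightarrow> (\<forall>p\<in>{1..length w}. one_at w p = B p)" by (rule shift)
  also have "\<dots> \<longleftrightarrow> (\<forall>p\<in>{1..length w}. w ! (p - 1) = B p)" by (auto simp: one_at_def)
  finally show ?thesis .
qed

lemma no_position_between_iff:
  fixes x y n :: nat
  assumes "x < y" "y \<le> n"
  shows "(\<forall>a\<in>{1..n}. \<not> (x < a \<and> a < y)) \<longleftrightarrow> y = x + 1"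
proof
  assume "\<forall>a\<in>{1..n}. \<not> (x < a \<and> a < y)"
  then have "\<not> (x < x + 1 \<and> x + 1 < y)" using assms by auto
  then show "y = x + 1" using assms by simp
qed auto

lemma unique_position_between_iff:
  fixes x y z n :: nat
  assumes "y \<le> n"
  shows "(x < z \<and> z < y \<and> (\<forall>a\<in>{1..n}. x < a \<and> a < y \<longrightarrow> a = z)) \<longleftrightarrow> z = x + 1 \<and> y = x + 2"
proof
  assume A: "x < z \<and> z < y \<and> (\<forall>a\<in>{1..n}. x < a \<and> a < y \<longrightarrow> a = z)"
  have "x + 1 \<in> {1..n}" "x < x + 1" "x + 1 < y" using A assms by auto
  then have z: "z = x + 1" using A by auto
  have "\<not> x + 2 < y"
  proof
    assume "x + 2 < y"
    moreover then have "x + 2 \<in> {1..n}" using assms by auto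
    ultimately have "x + 2 = z" using A by auto
    then show False using z by simp
  qed
  then show "z = x + 1 \<and> y = x + 2" using A z by auto
qed auto

lemma sat_at_level:
  "free_vars \<phi> \<subseteq> {x. x \<le> 6*d} \<union> {x. odd x} \<Longrightarrow> sat w (at_level \<sigma> d z1 z2 a) \<phi> = sat w \<sigma> \<phi>"
  by (rule sat_cong) auto

lemma teval_at_level: "tvars t \<subseteq> {x. x \<le> 6*d} \<Longrightarrow> teval w (at_level \<sigma> d z1 z2 a) t = teval w \<sigma> t"
  by (rule teval_cong) auto

lemma teval_left_end_at_level: "teval w (at_level \<sigma> d z1 z2 a) (left_end d) = teval w \<sigma> (left_end d)"
  by (simp add: left_end_def)

lemma sat_guard_at_level:
  "windows_below d ws \<Longrightarrow> c \<in> set ws \<Longrightarrow> sat w (at_level \<sigma> d z1 z2 a) (guard c) = sat w \<sigma> (guard c)"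
  by (intro sat_at_level) auto

lemma sat_window_check:
  assumes b: "\<And>p. sat w \<sigma>' (\<beta> p) = B p"
  and e: "teval w \<sigma>' (right_end c) = y" and at: "teval w \<sigma>' (left_end d) = x"
  and v: "\<sigma>' (6*d+2) = z1" "\<sigma>' (6*d+4) = z2" "\<sigma>' (6*d+6) = a"
  shows "sat w \<sigma>' (window_check \<beta> d c) =
   (let L = pat_hi c - pat_lo c in
    if L = 0 then x = y \<and> one_at w x = B (pat_lo c)
    else if L = 1 then x < y \<and> \<not> (x < a \<and> a < y) \<and> one_at w x = B (pat_lo c) \<and> one_at w y = B (pat_hi c)
    else if L = 2 then x < z1 \<and> z1 < y \<and> (x < a \<and> a < y \<longrightarrow> a = z1) \<and> one_at w x = B (pat_lo c)
       \<and> one_at w z1 = B (pat_lo c + 1) \<and> one_at w y = B (pat_hi c)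
    else x < z1 \<and> z1 < z2 \<and> z2 < y)"
proof -
  have vars: "teval w \<sigma>' (Var (6*d+2)) = z1" "teval w \<sigma>' (Var (6*d+4)) = z2"
    "teval w \<sigma>' (Var (6*d+6)) = a"
    using v by simp_all
  show ?thesis
    unfolding window_check_def Let_def
    by (simp only: if_distrib[where f="sat w \<sigma>'"] sat.simps(3,4,6,7,9) sat_S sat_Conjs sat_Iff list.set
        ball_simps insert_iff b e at vars empty_iff simp_thms(21))
qed

lemma sat_window_check_at_level:
  fixes w :: "bool list" and \<sigma> :: "nat \<Rightarrow> nat"
  assumes \<beta>: "\<forall>p. free_vars (\<beta> p) \<subseteq> {x. odd x}"
  and e: "tvars (right_end c) \<subseteq> {x. x \<le> 6*d}"
  defines "x \<equiv> teval w \<sigma> (left_end d)" and "y \<equiv> teval w \<sigma> (right_end c)"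
    and "B \<equiv> \<lambda>p. sat w \<sigma> (\<beta> p)"
  shows "sat w (at_level \<sigma> d z1 z2 a) (window_check \<beta> d c) =
   (let L = pat_hi c - pat_lo c in
    if L = 0 then x = y \<and> one_at w x = B (pat_lo c)
    else if L = 1 then x < y \<and> \<not> (x < a \<and> a < y) \<and> one_at w x = B (pat_lo c) \<and> one_at w y = B (pat_hi c)
    else if L = 2 then x < z1 \<and> z1 < y \<and> (x < a \<and> a < y \<longrightarrow> a = z1) \<and> one_at w x = B (pat_lo c)
       \<and> one_at w z1 = B (pat_lo c + 1) \<and> one_at w y = B (pat_hi c)
    else x < z1 \<and> z1 < z2 \<and> z2 < y)"
proof (rule sat_window_check)
  show "sat w (at_level \<sigma> d z1 z2 a) (\<beta> p) = B p" for p
    unfolding B_def using \<beta> by (intro sat_at_level) auto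
  show "teval w (at_level \<sigma> d z1 z2 a) (right_end c) = y"
    unfolding y_def using e by (rule teval_at_level)
  show "teval w (at_level \<sigma> d z1 z2 a) (left_end d) = x"
    unfolding x_def by (rule teval_left_end_at_level)
qed simp_all

lemma sat_window_check_splittable:
  assumes "\<forall>p. free_vars (\<beta> p) \<subseteq> {x. odd x}" "tvars (right_end c) \<subseteq> {x. x \<le> 6*d}" "splittable c"
  shows "sat w (at_level \<sigma> d z1 z2 a) (window_check \<beta> d c) \<longleftrightarrow>
    teval w \<sigma> (left_end d) < z1 \<and> z1 < z2 \<and> z2 < teval w \<sigma> (right_end c)"
proof -
  have L: "pat_hi c - pat_lo c \<noteq> 0" "pat_hi c - pat_lo c \<noteq> 1" "pat_hi c - pat_lo c \<noteq> 2"
    using assms(3) by (auto simp: splittable_def)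
  show ?thesis
    by (simp only: sat_window_check_at_level[OF assms(1,2)] Let_def if_not_P[OF L(1)] if_not_P[OF L(2)]
      if_not_P[OF L(3)])
qed

lemma sat_window_checks:
  assumes "windows_below d ws" "active w \<sigma> ws c"
  shows "sat w (at_level \<sigma> d z1 z2 a) (window_checks \<beta> d ws) =
         sat w (at_level \<sigma> d z1 z2 a) (window_check \<beta> d c)"
proof -
  have "sat w (at_level \<sigma> d z1 z2 a) (window_checks \<beta> d ws) \<longleftrightarrow>
      (\<exists>c'\<in>set ws. sat w \<sigma> (guard c') \<and> sat w (at_level \<sigma> d z1 z2 a) (window_check \<beta> d c'))"
    unfolding window_checks_def using sat_guard_at_level[OF assms(1)] by auto
  then show ?thesis using assms(2) by blast
qed

lemma sat_descend:
  assumes "windows_below d ws" "active w \<sigma> ws c"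
  shows "sat w (at_level \<sigma> d z1 z2 a) (descend d ws) \<longleftrightarrow>
         splittable c \<and> (a = teval w \<sigma> (left_end d) \<or> a = z1 \<or> a = z2)"
proof -
  have "sat w (at_level \<sigma> d z1 z2 a) (descend d ws) \<longleftrightarrow>
      (\<exists>c'\<in>set ws. sat w \<sigma> (guard c') \<and> splittable c') \<and> (a = teval w \<sigma> (left_end d) \<or> a = z1 \<or> a = z2)"
    unfolding descend_def using sat_guard_at_level[OF assms(1)] teval_left_end_at_level by auto
  then show ?thesis using assms(2) by blast
qed

lemma sat_leaf_window:
  assumes rng: "\<forall>x. \<sigma> x \<in> {1..length w}"
  and \<beta>: "\<forall>p. free_vars (\<beta> p) \<subseteq> {x. odd x}"
  and e: "tvars (right_end c) \<subseteq> {x. x \<le> 6*d}"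
  and L: "pat_hi c - pat_lo c \<le> 2" "pat_lo c \<le> pat_hi c"
  shows "(\<exists>z1\<in>{1..length w}. \<exists>z2\<in>{1..length w}. \<forall>a\<in>{1..length w}.
            sat w (at_level \<sigma> d z1 z2 a) (window_check \<beta> d c)) \<longleftrightarrow>
    matches w (\<lambda>p. sat w \<sigma> (\<beta> p)) (pat_lo c) (pat_hi c) (teval w \<sigma> (left_end d)) (teval w \<sigma> (right_end c))"
  (is "?L \<longleftrightarrow> ?R")
proof -
  define x where "x = teval w \<sigma> (left_end d)"
  define y where "y = teval w \<sigma> (right_end c)"
  define B where "B = (\<lambda>p. sat w \<sigma> (\<beta> p))"
  have xr: "x \<in> {1..length w}" and yr: "y \<in> {1..length w}"
    unfolding x_def y_def using teval_range[OF rng] by auto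
  note check = sat_window_check_at_level[OF \<beta> e, where w=w and \<sigma>=\<sigma>, folded x_def y_def,
    unfolded Let_def]
  have R: "?R \<longleftrightarrow> y = x + (pat_hi c - pat_lo c) \<and>
      (\<forall>i\<le>pat_hi c - pat_lo c. one_at w (x+i) = B (pat_lo c + i))"
    unfolding matches_def x_def y_def B_def ..
  consider "pat_hi c = pat_lo c" | "pat_hi c = pat_lo c + 1" | "pat_hi c = pat_lo c + 2" using L
    by linarith
  then show ?thesis
  proof cases
    case 1
    then show ?thesis unfolding R check B_def using xr by auto
  next
    case 2
    have "?L \<longleftrightarrow> x < y \<and> (\<forall>a\<in>{1..length w}. \<not> (x < a \<and> a < y)) \<and>
        one_at w x = B (pat_lo c) \<and> one_at w y = B (pat_hi c)"
      unfolding check B_def using 2 xr by auto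
    also have "\<dots> \<longleftrightarrow> y = x + 1 \<and> one_at w x = B (pat_lo c) \<and> one_at w y = B (pat_hi c)"
      using no_position_between_iff[of x y "length w"] yr by auto
    also have "\<dots> \<longleftrightarrow> ?R"
      unfolding R using 2 by (auto simp: le_Suc_eq)
    finally show ?thesis .
  next
    case 3
    have yn: "y \<le> length w" using yr by simp
    have "?L \<longleftrightarrow> (\<exists>z1\<in>{1..length w}.
        (x < z1 \<and> z1 < y \<and> (\<forall>a\<in>{1..length w}. x < a \<and> a < y \<longrightarrow> a = z1)) \<and>
        one_at w x = B (pat_lo c) \<and> one_at w z1 = B (pat_lo c + 1) \<and> one_at w y = B (pat_hi c))"
      unfolding check B_def using 3 xr by auto
    also have "\<dots> \<longleftrightarrow> (\<exists>z1\<in>{1..length w}. (z1 = x + 1 \<and> y = x + 2) \<and>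
        one_at w x = B (pat_lo c) \<and> one_at w z1 = B (pat_lo c + 1) \<and> one_at w y = B (pat_hi c))"
      by (simp only: unique_position_between_iff[OF yn])
    also have "\<dots> \<longleftrightarrow> y = x + 2 \<and> one_at w x = B (pat_lo c) \<and> one_at w (x + 1) = B (pat_lo c + 1) \<and>
        one_at w y = B (pat_hi c)"
      using xr yr by auto
    also have "\<dots> \<longleftrightarrow> ?R"
      unfolding R using 3 by (auto simp: le_Suc_eq numeral_2_eq_2)
    finally show ?thesis .
  qed
qed

lemma ternary_split_bounds:
  fixes L m :: nat
  assumes "3 \<le> L"
  shows "0 < L div 3" "0 < (L+1) div 3" "L div 3 + (L+1) div 3 < L"
    and "L \<le> 6 * m \<Longrightarrow> L div 3 \<le> 2 * m \<and> (L+1) div 3 \<le> 2 * m \<and> L - L div 3 - (L+1) div 3 \<le> 2 * m"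
proof -
  obtain q r where qr: "L = 3*q + r" "r < 3" using div_mult_mod_eq[of L 3] mod_less_divisor[of 3 L]
    by (metis mult.commute zero_less_numeral)
  then have "r = 0 \<or> r = 1 \<or> r = 2" by linarith
  then have thirds: "L div 3 = q \<and> (L+1) div 3 = (if r = 2 then q+1 else q)" using qr by auto
  show "0 < L div 3" "0 < (L+1) div 3" "L div 3 + (L+1) div 3 < L"
    using thirds qr assms by (auto split: if_splits)
  show "L \<le> 6 * m \<Longrightarrow> L div 3 \<le> 2 * m \<and> (L+1) div 3 \<le> 2 * m \<and> L - L div 3 - (L+1) div 3 \<le> 2 * m"
    using thirds qr by (auto split: if_splits)
qed

lemma cuts_between:
  assumes "splittable c"
  shows "pat_lo c < cut1 c" "cut1 c < cut2 c" "cut2 c < pat_hi c"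
  using ternary_split_bounds(1-3)[of "pat_hi c - pat_lo c"] assms
  unfolding splittable_def cut1_def cut2_def by linarith+

lemma next_windows_below:
  assumes "windows_below d ws"
  shows "windows_below (d+1) (next_windows d ws)"
proof
  fix c' assume "c' \<in> set (next_windows d ws)"
  then obtain c where c: "c \<in> set ws" "c' \<in> set (subwindows d c)" unfolding next_windows_def by auto
  have v: "\<forall>x\<in>free_vars (guard c). x \<le> 6*d" "\<forall>x\<in>tvars (right_end c). x \<le> 6*d"
    using assms c(1) by auto
  show "free_vars (guard c') \<subseteq> {x. x \<le> 6*(d+1)} \<and> tvars (right_end c') \<subseteq> {x. x \<le> 6*(d+1)}"
    using c(2) unfolding subwindows_def left_end_def
      by (auto split: if_splits dest!: bspec[OF v(1)] bspec[OF v(2)])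
qed

lemma next_windows_short:
  assumes short: "windows_short (Suc k) ws"
  shows "windows_short k (next_windows d ws)"
proof
  fix c' assume "c' \<in> set (next_windows d ws)"
  then obtain c where c: "c \<in> set ws" "splittable c" "c' \<in> set (subwindows d c)"
    unfolding next_windows_def by auto
  define L where "L = pat_hi c - pat_lo c"
  have "3 \<le> L" "L \<le> 6 * 3^k" "pat_lo c \<le> pat_hi c" using c short unfolding splittable_def L_def by auto
  note bounds = ternary_split_bounds(1-3)[OF this(1)] ternary_split_bounds(4)[OF this(1,2)]
  have ends: "pat_hi c = pat_lo c + L" "cut1 c = pat_lo c + L div 3" "cut2 c = cut1 c + (L + 1) div 3"
    using \<open>pat_lo c \<le> pat_hi c\<close> unfolding L_def cut1_def cut2_def by simp_all
  from c(3) consider "pat_lo c' = pat_lo c" "pat_hi c' = cut1 c" | "pat_lo c' = cut1 c" "pat_hi c' = cut2 c"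
    | "pat_lo c' = cut2 c" "pat_hi c' = pat_hi c"
    unfolding subwindows_def by auto
  then show "pat_lo c' \<le> pat_hi c' \<and> pat_hi c' - pat_lo c' \<le> 2 * 3^k"
    by cases (use bounds ends in linarith)+
qed

lemma active_subwindow:
  assumes below: "windows_below d ws"
  and c: "c \<in> set ws" "splittable c" and uniq: "\<forall>c'\<in>set ws. sat w \<sigma> (guard c') \<longrightarrow> c' = c"
  and order: "teval w \<sigma> (left_end d) < z1" "z1 < z2"
  and c': "c' \<in> set (subwindows d c)" "sat w (at_level \<sigma> d z1 z2 a) (guard c')"
  shows "active w (at_level \<sigma> d z1 z2 a) (next_windows d ws) c'"
proof -
  have "c'' = c'" if c'': "c'' \<in> set (next_windows d ws)" "sat w (at_level \<sigma> d z1 z2 a) (guard c'')" for c''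
  proof -
    obtain p where p: "p \<in> set ws" "c'' \<in> set (subwindows d p)"
      using c''(1) unfolding next_windows_def by auto
    have "sat w (at_level \<sigma> d z1 z2 a) (guard p)" using p(2) c''(2) unfolding subwindows_def by auto
    then have "p = c" using sat_guard_at_level[OF below p(1)] uniq p(1) by auto
    then show "c'' = c'" using p(2) c''(2) c' order teval_left_end_at_level[of w \<sigma> d z1 z2 a]
      unfolding subwindows_def by auto
  qed
  moreover have "c' \<in> set (next_windows d ws)" using c c' unfolding next_windows_def by auto
  ultimately show ?thesis using c'(2) by blast
qed

definition match_formula_correct :: "bool list \<Rightarrow> (nat \<Rightarrow> fform) \<Rightarrow> nat \<Rightarrow> bool" where
  "match_formula_correct w \<beta> k \<longleftrightarrow>
    (\<forall>d ws \<sigma> c. (\<forall>x. \<sigma> x \<in> {1..length w}) \<longrightarrow> windows_below d ws \<longrightarrow> windows_short k ws \<longrightarrow>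
      active w \<sigma> ws c \<longrightarrow> (sat w \<sigma> (match_formula \<beta> k d ws) \<longleftrightarrow>
        matches w (\<lambda>p. sat w \<sigma> (\<beta> p)) (pat_lo c) (pat_hi c) (teval w \<sigma> (left_end d))
          (teval w \<sigma> (right_end c))))"

lemma sat_match_formula_subwindows:
  fixes w :: "bool list" and \<sigma> :: "nat \<Rightarrow> nat" and d :: nat and c :: window
    and \<beta> :: "nat \<Rightarrow> fform"
  defines "x \<equiv> teval w \<sigma> (left_end d)" and "y \<equiv> teval w \<sigma> (right_end c)"
    and "B \<equiv> \<lambda>p. sat w \<sigma> (\<beta> p)"
  assumes IH: "match_formula_correct w \<beta> k"
  and \<beta>: "\<forall>p. free_vars (\<beta> p) \<subseteq> {x. odd x}"
  and rng: "\<forall>x. \<sigma> x \<in> {1..length w}"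
  and below: "windows_below d ws" and short: "windows_short (Suc k) ws"
  and act: "active w \<sigma> ws c" and spl: "splittable c"
  and z: "z1 \<in> {1..length w}" "z2 \<in> {1..length w}" "x < z1" "z1 < z2"
  shows "sat w (at_level \<sigma> d z1 z2 x) (match_formula \<beta> k (d+1) (next_windows d ws)) \<longleftrightarrow>
           matches w B (pat_lo c) (cut1 c) x z1"
    and "sat w (at_level \<sigma> d z1 z2 z1) (match_formula \<beta> k (d+1) (next_windows d ws)) \<longleftrightarrow>
           matches w B (cut1 c) (cut2 c) z1 z2"
    and "sat w (at_level \<sigma> d z1 z2 z2) (match_formula \<beta> k (d+1) (next_windows d ws)) \<longleftrightarrow>
           matches w B (cut2 c) (pat_hi c) z2 y"
proof -
  let ?\<sigma> = "at_level \<sigma> d z1 z2"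
  have c: "c \<in> set ws" "sat w \<sigma> (guard c)" and uniq: "\<forall>c'\<in>set ws. sat w \<sigma> (guard c') \<longrightarrow> c' = c"
    using act by auto
  have child: "sat w (?\<sigma> a) (match_formula \<beta> k (d+1) (next_windows d ws)) \<longleftrightarrow>
      matches w B (pat_lo c') (pat_hi c') a (teval w (?\<sigma> a) (right_end c'))"
    if a: "a \<in> {1..length w}" and c': "c' \<in> set (subwindows d c)" "sat w (?\<sigma> a) (guard c')" for a c'
  proof -
    have "(\<lambda>p. sat w (?\<sigma> a) (\<beta> p)) = B"
      unfolding B_def using \<beta> by (intro ext sat_at_level) auto
    moreover have "teval w (?\<sigma> a) (left_end (d+1)) = a" by (simp add: left_end_def)
    moreover have "active w (?\<sigma> a) (next_windows d ws) c'"
      using active_subwindow[OF below c(1) spl uniq _ _ c'] z unfolding x_def by blast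
    ultimately show ?thesis
      using IH[unfolded match_formula_correct_def, rule_format,
        where d="d+1" and ws="next_windows d ws" and \<sigma>="?\<sigma> a" and c=c']
        rng a z(1,2)
        next_windows_below[OF below] next_windows_short[OF short] by auto
  qed
  have guard: "sat w (?\<sigma> a) (guard c)" for a
    using c sat_guard_at_level[OF below c(1)] by simp
  have x: "x \<in> {1..length w}" unfolding x_def by (rule teval_range[OF rng])
  have left: "teval w (?\<sigma> a) (left_end d) = x" for a
    unfolding x_def by (rule teval_left_end_at_level)
  have right: "teval w (?\<sigma> a) (right_end c) = y" for a
    unfolding y_def using below c(1) by (intro teval_at_level) auto
  let ?c0 = "Window (Conj (guard c) (Eq (Var (6*d+6)) (left_end d))) (Var (6*d+2)) (pat_lo c) (cut1 c)"
  let ?c1 = "Window (Conj (guard c) (Eq (Var (6*d+6)) (Var (6*d+2)))) (Var (6*d+4)) (cut1 c) (cut2 c)"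
  let ?c2 = "Window (Conj (guard c) (Eq (Var (6*d+6)) (Var (6*d+4)))) (right_end c) (cut2 c) (pat_hi c)"
  have sub: "?c0 \<in> set (subwindows d c)" "?c1 \<in> set (subwindows d c)" "?c2 \<in> set (subwindows d c)"
    by (simp_all add: subwindows_def)
  have g: "sat w (?\<sigma> x) (guard ?c0)" "sat w (?\<sigma> z1) (guard ?c1)" "sat w (?\<sigma> z2) (guard ?c2)"
    using guard left by simp_all
  show "sat w (?\<sigma> x) (match_formula \<beta> k (d+1) (next_windows d ws)) \<longleftrightarrow>
           matches w B (pat_lo c) (cut1 c) x z1"
    and "sat w (?\<sigma> z1) (match_formula \<beta> k (d+1) (next_windows d ws)) \<longleftrightarrow>
           matches w B (cut1 c) (cut2 c) z1 z2"
    and "sat w (?\<sigma> z2) (match_formula \<beta> k (d+1) (next_windows d ws)) \<longleftrightarrow>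
           matches w B (cut2 c) (pat_hi c) z2 y"
    using child[OF x sub(1) g(1)] child[OF z(1) sub(2) g(2)] child[OF z(2) sub(3) g(3)] right
      by simp_all
qed

lemma sat_splittable_window:
  fixes w :: "bool list" and \<sigma> :: "nat \<Rightarrow> nat" and d :: nat and c :: window
    and \<beta> :: "nat \<Rightarrow> fform"
  defines "x \<equiv> teval w \<sigma> (left_end d)" and "y \<equiv> teval w \<sigma> (right_end c)"
    and "B \<equiv> \<lambda>p. sat w \<sigma> (\<beta> p)"
  assumes IH: "match_formula_correct w \<beta> k"
  and \<beta>: "\<forall>p. free_vars (\<beta> p) \<subseteq> {x. odd x}"
  and rng: "\<forall>x. \<sigma> x \<in> {1..length w}"
  and below: "windows_below d ws" and short: "windows_short (Suc k) ws"
  and act: "active w \<sigma> ws c" and spl: "splittable c"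
  and z: "z1 \<in> {1..length w}" "z2 \<in> {1..length w}"
  shows "(\<forall>a\<in>{1..length w}. sat w (at_level \<sigma> d z1 z2 a) (window_check \<beta> d c) \<and>
          (a = x \<or> a = z1 \<or> a = z2 \<longrightarrow>
            sat w (at_level \<sigma> d z1 z2 a) (match_formula \<beta> k (d+1) (next_windows d ws)))) \<longleftrightarrow>
    x < z1 \<and> z1 < z2 \<and> z2 < y \<and> matches w B (pat_lo c) (cut1 c) x z1 \<and>
      matches w B (cut1 c) (cut2 c) z1 z2 \<and> matches w B (cut2 c) (pat_hi c) z2 y"
proof -
  let ?\<sigma> = "at_level \<sigma> d z1 z2"
  let ?next = "match_formula \<beta> k (d+1) (next_windows d ws)"
  have e: "tvars (right_end c) \<subseteq> {x. x \<le> 6*d}" using below act by auto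
  have x: "x \<in> {1..length w}" unfolding x_def by (rule teval_range[OF rng])
  note check = sat_window_check_splittable[OF \<beta> e spl, where w=w and \<sigma>=\<sigma>, folded x_def y_def]
  show ?thesis
  proof (cases "x < z1 \<and> z1 < z2 \<and> z2 < y")
    case order: True
    then have "teval w \<sigma> (left_end d) < z1" "z1 < z2" unfolding x_def by auto
    note sub = sat_match_formula_subwindows[OF IH \<beta> rng below short act spl z this, folded x_def y_def B_def]
    have "(\<forall>a\<in>{1..length w}. sat w (?\<sigma> a) (window_check \<beta> d c) \<and>
          (a = x \<or> a = z1 \<or> a = z2 \<longrightarrow> sat w (?\<sigma> a) ?next)) \<longleftrightarrow>
        (\<forall>a\<in>{1..length w}. a = x \<or> a = z1 \<or> a = z2 \<longrightarrow> sat w (?\<sigma> a) ?next)"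
      using check order by simp
    also have "\<dots> \<longleftrightarrow> sat w (?\<sigma> x) ?next \<and> sat w (?\<sigma> z1) ?next \<and> sat w (?\<sigma> z2) ?next"
      using x z by blast
    finally show ?thesis using sub order by blast
  next
    case False
    then have "\<not> sat w (?\<sigma> x) (window_check \<beta> d c)" using check by simp
    then show ?thesis using x False by blast
  qed
qed

lemma sat_match_formula_Suc:
  assumes IH: "match_formula_correct w \<beta> k"
  and \<beta>: "\<forall>p. free_vars (\<beta> p) \<subseteq> {x. odd x}"
  and rng: "\<forall>x. \<sigma> x \<in> {1..length w}"
  and below: "windows_below d ws" and short: "windows_short (Suc k) ws"
  and act: "active w \<sigma> ws c"
  shows "sat w \<sigma> (match_formula \<beta> (Suc k) d ws) \<longleftrightarrow>
    matches w (\<lambda>p. sat w \<sigma> (\<beta> p)) (pat_lo c) (pat_hi c) (teval w \<sigma> (left_end d))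
      (teval w \<sigma> (right_end c))"
proof -
  define x where "x = teval w \<sigma> (left_end d)"
  define y where "y = teval w \<sigma> (right_end c)"
  define B where "B = (\<lambda>p. sat w \<sigma> (\<beta> p))"
  have e: "tvars (right_end c) \<subseteq> {x. x \<le> 6*d}" using below act by auto
  have xr: "x \<in> {1..length w}" and yr: "y \<in> {1..length w}"
    unfolding x_def y_def using teval_range[OF rng] by auto
  have unfold: "sat w \<sigma> (match_formula \<beta> (Suc k) d ws) \<longleftrightarrow>
    (\<exists>z1\<in>{1..length w}. \<exists>z2\<in>{1..length w}. \<forall>a\<in>{1..length w}.
      sat w (at_level \<sigma> d z1 z2 a) (window_check \<beta> d c) \<and>
      (splittable c \<and> (a = x \<or> a = z1 \<or> a = z2) \<longrightarrow>
        sat w (at_level \<sigma> d z1 z2 a) (match_formula \<beta> k (d+1) (next_windows d ws))))"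
    unfolding x_def by (simp only: match_formula.simps sat.simps sat_window_checks[OF below act]
      sat_descend[OF below act])
  show ?thesis
  proof (cases "splittable c")
    case False
    then have "pat_hi c - pat_lo c \<le> 2" "pat_lo c \<le> pat_hi c" using act short
      by (auto simp: splittable_def)
    then show ?thesis unfolding unfold x_def using sat_leaf_window[OF rng \<beta> e] False by simp
  next
    case True
    note step = sat_splittable_window[OF IH \<beta> rng below short act True, folded x_def y_def B_def]
    have "(\<forall>a\<in>{1..length w}. sat w (at_level \<sigma> d z1 z2 a) (window_check \<beta> d c) \<and>
      (splittable c \<and> (a = x \<or> a = z1 \<or> a = z2) \<longrightarrow>
        sat w (at_level \<sigma> d z1 z2 a) (match_formula \<beta> k (d+1) (next_windows d ws)))) \<longleftrightarrow>
      x < z1 \<and> z1 < z2 \<and> z2 < y \<and> matches w B (pat_lo c) (cut1 c) x z1 \<and>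
        matches w B (cut1 c) (cut2 c) z1 z2 \<and> matches w B (cut2 c) (pat_hi c) z2 y"
      if "z1 \<in> {1..length w}" "z2 \<in> {1..length w}" for z1 z2
      by (simp only: True simp_thms step[OF that])
    then have "sat w \<sigma> (match_formula \<beta> (Suc k) d ws) \<longleftrightarrow>
      (\<exists>z1\<in>{1..length w}. \<exists>z2\<in>{1..length w}. x < z1 \<and> z1 < z2 \<and> z2 < y \<and>
        matches w B (pat_lo c) (cut1 c) x z1 \<and> matches w B (cut1 c) (cut2 c) z1 z2 \<and>
        matches w B (cut2 c) (pat_hi c) z2 y)"
      unfolding unfold by (intro bex_cong refl) auto
    also have "\<dots> \<longleftrightarrow> matches w B (pat_lo c) (pat_hi c) x y"
      using xr yr by (intro matches_split3 cuts_between[OF True]) auto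
    finally show ?thesis unfolding x_def y_def B_def .
  qed
qed

lemma match_formula_correct:
  assumes "\<forall>p. free_vars (\<beta> p) \<subseteq> {x. odd x}"
  shows "match_formula_correct w \<beta> k"
proof (induction k)
  case 0
  show ?case unfolding match_formula_correct_def
  proof (intro allI impI)
    fix d ws \<sigma> c
    assume rng: "\<forall>x. \<sigma> x \<in> {1..length w}" and below: "windows_below d ws"
      and short: "windows_short 0 ws" and act: "active w \<sigma> ws c"
    then have leaf: "tvars (right_end c) \<subseteq> {x. x \<le> 6*d}" "pat_hi c - pat_lo c \<le> 2" "pat_lo c \<le> pat_hi c"
      by auto
    show "sat w \<sigma> (match_formula \<beta> 0 d ws) \<longleftrightarrow> matches w (\<lambda>p. sat w \<sigma> (\<beta> p)) (pat_lo c) (pat_hi c)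
      (teval w \<sigma> (left_end d)) (teval w \<sigma> (right_end c))"
      by (simp only: match_formula.simps sat.simps sat_window_checks[OF below act]
        sat_leaf_window[OF rng assms leaf])
  qed
next
  case (Suc k)
  then show ?case unfolding match_formula_correct_def using sat_match_formula_Suc[OF Suc assms] by blast
qed

lemma sat_match_formula_root:
  assumes \<beta>: "\<forall>p. free_vars (\<beta> p) \<subseteq> {x. odd x}"
  and rng: "\<forall>x. \<sigma> x \<in> {1..length w}"
  and K: "length w \<le> 3^K"
  shows "sat w \<sigma> (match_formula \<beta> K 0 [Window FTrue Max 1 (length w)]) \<longleftrightarrow>
     (\<forall>p\<in>{1..length w}. w ! (p - 1) = sat w \<sigma> (\<beta> p))"
proof -
  have n: "1 \<le> length w" using rng by (meson atLeastAtMost_iff order_trans)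
  have "sat w \<sigma> (match_formula \<beta> K 0 [Window FTrue Max 1 (length w)]) \<longleftrightarrow>
     matches w (\<lambda>p. sat w \<sigma> (\<beta> p)) 1 (length w) 1 (length w)"
    using match_formula_correct[OF \<beta>, of w K, unfolded match_formula_correct_def, rule_format,
      where d=0 and ws="[Window FTrue Max 1 (length w)]" and \<sigma>=\<sigma> and c="Window FTrue Max 1 (length w)"]
      rng n K by (simp add: left_end_def)
  then show ?thesis using matches_whole_word[OF n] by simp
qed

lemma nth_eq_iff_letters_eq:
  assumes "length u = length w"
  shows "(\<forall>p\<in>{1..length w}. w ! (p - 1) = u ! (p - 1)) \<longleftrightarrow> w = u"
proof
  assume letters: "\<forall>p\<in>{1..length w}. w ! (p - 1) = u ! (p - 1)"
  show "w = u"
  proof (rule nth_equalityI)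
    fix q assume "q < length w"
    then have "q + 1 \<in> {1..length w}" by simp
    then show "w ! q = u ! q" using letters by fastforce
  qed (use assms in simp)
qed simp

lemma digits_eq_imp_eq:
  fixes t :: nat
  assumes "2 \<le> t"
  shows "i < t^r \<Longrightarrow> i' < t^r \<Longrightarrow> \<forall>j<r. (i div t^j) mod t = (i' div t^j) mod t \<Longrightarrow> i = i'"
proof (induction r arbitrary: i i')
  case 0 then show ?case by simp
next
  case (Suc r)
  have m: "i mod t = i' mod t" using Suc.prems(3) by (metis div_by_1 power_0 zero_less_Suc)
  have "\<forall>j<r. (i div t div t^j) mod t = (i' div t div t^j) mod t"
  proof (intro allI impI)
    fix j assume "j < r"
    then have "(i div t^(Suc j)) mod t = (i' div t^(Suc j)) mod t" using Suc.prems(3) by auto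
    then show "(i div t div t^j) mod t = (i' div t div t^j) mod t" by (simp add: div_mult2_eq)
  qed
  moreover have "i div t < t^r" "i' div t < t^r" using Suc.prems(1,2) assms
    by (simp_all add: div_less_iff_less_mult mult.commute)
  ultimately have "i div t = i' div t" using Suc.IH by blast
  then show ?case using m by (metis div_mult_mod_eq)
qed

text \<open>Digit v < t is named by the position min (v = 0) or by the odd variable 2v+1, and these
  positions are forced to increase; the odd variable 2(t+j)+1 holds the j-th base-t digit of
  the index i of the selected word W i.\<close>

definition digit_pos :: "nat \<Rightarrow> fterm" where "digit_pos v = (if v = 0 then Min else Var (2*v+1))"

definition digit :: "nat \<Rightarrow> nat \<Rightarrow> nat \<Rightarrow> nat" where "digit t j i = (i div t^j) mod t"

definition selects :: "nat \<Rightarrow> nat \<Rightarrow> nat \<Rightarrow> fform" where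
  "selects t r i = Conjs (map (\<lambda>j. Eq (Var (2*(t+j)+1)) (digit_pos (digit t j i))) [0..<r])"

definition increasing_digits :: "nat \<Rightarrow> fform" where
  "increasing_digits t =
    Conjs (concat (map (\<lambda>u. map (\<lambda>v. Less (digit_pos u) (digit_pos v)) [Suc u..<t]) [0..<t]))"

definition selector_vars :: "nat \<Rightarrow> nat \<Rightarrow> nat list" where
  "selector_vars t r = map (\<lambda>v. 2*v+1) [1..<t] @ map (\<lambda>j. 2*(t+j)+1) [0..<r]"

definition selected_bit :: "nat \<Rightarrow> nat \<Rightarrow> nat \<Rightarrow> (nat \<Rightarrow> bool list) \<Rightarrow> nat \<Rightarrow> fform" where
  "selected_bit t r k W p = Disjs (map (selects t r) (filter (\<lambda>i. W i ! (p - 1)) [0..<k]))"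

definition selector_body ::
    "nat \<Rightarrow> nat \<Rightarrow> nat \<Rightarrow> nat \<Rightarrow> nat \<Rightarrow> (nat \<Rightarrow> bool list) \<Rightarrow> fform" where
  "selector_body t r k K n W = Conj (increasing_digits t) (Conj (Disjs (map (selects t r) [0..<k]))
    (match_formula (selected_bit t r k W) K 0 [Window FTrue Max 1 n]))"

definition selector_sentence ::
    "nat \<Rightarrow> nat \<Rightarrow> nat \<Rightarrow> nat \<Rightarrow> nat \<Rightarrow> (nat \<Rightarrow> bool list) \<Rightarrow> fform" where
  "selector_sentence t r k K n W = Exs (selector_vars t r) (selector_body t r k K n W)"

lemma qcount_selects: "qcount (selects t r i) = 0"
  unfolding selects_def qcount_Conjs by (intro sum_list_qcount_eq_0) auto
lemma qcount_increasing_digits: "qcount (increasing_digits t) = 0"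
  unfolding increasing_digits_def qcount_Conjs by (intro sum_list_qcount_eq_0) auto
lemma qcount_selected_bit: "qcount (selected_bit t r k W p) = 0"
  unfolding selected_bit_def qcount_Disjs by (intro sum_list_qcount_eq_0) (auto simp: qcount_selects)

lemma qcount_selector_sentence: "qcount (selector_sentence t r k K n W) = (t - 1) + r + 3 * (K+1)"
proof -
  have "qcount (match_formula (selected_bit t r k W) K 0 [Window FTrue Max 1 n]) = 3 * (K+1)"
    by (rule qcount_match_formula) (auto simp: qcount_selected_bit)
  moreover have "sum_list (map qcount (map (selects t r) [0..<k])) = 0"
    by (intro sum_list_qcount_eq_0) (auto simp: qcount_selects)
  ultimately show ?thesis unfolding selector_sentence_def selector_body_def
    by (simp add: qcount_increasing_digits selector_vars_def)
qed

lemma digit_var_in_selector_vars: "j < r \<Longrightarrow> 2*(t+j)+1 \<in> set (selector_vars t r)"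
  unfolding selector_vars_def set_append set_map by (rule UnI2, rule image_eqI[where x=j]) auto

lemma pos_var_in_selector_vars: "1 \<le> v \<Longrightarrow> v < t \<Longrightarrow> 2*v+1 \<in> set (selector_vars t r)"
  unfolding selector_vars_def set_append set_map by (rule UnI1, rule image_eqI[where x=v]) auto

lemma tvars_digit_pos: "v < t \<Longrightarrow> tvars (digit_pos v) \<subseteq> set (selector_vars t r)"
  unfolding digit_pos_def using pos_var_in_selector_vars[of v t r] by simp

lemma digit_less: "0 < t \<Longrightarrow> digit t j i < t"
  unfolding digit_def by simp

lemma free_vars_selects:
  assumes "0 < t" shows "free_vars (selects t r i) \<subseteq> set (selector_vars t r)"
proof
  fix x assume "x \<in> free_vars (selects t r i)"
  then obtain j where j: "j < r" "x = 2*(t+j)+1 \<or> x \<in> tvars (digit_pos (digit t j i))"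
    unfolding selects_def by auto
  show "x \<in> set (selector_vars t r)"
    using j digit_var_in_selector_vars[of j r t] tvars_digit_pos[of "digit t j i" t r] digit_less[OF assms, of j i] by blast
qed

lemma increasing_digits_conjunct:
  "p \<in> set (concat (map (\<lambda>u. map (\<lambda>v. Less (digit_pos u) (digit_pos v)) [Suc u..<t]) [0..<t])) \<Longrightarrow>
   \<exists>u v. u < t \<and> v < t \<and> p = Less (digit_pos u) (digit_pos v)"
  by auto (use Suc_le_lessD less_trans in blast)

lemma free_vars_increasing_digits: "free_vars (increasing_digits t) \<subseteq> set (selector_vars t r)"
proof
  fix x assume "x \<in> free_vars (increasing_digits t)"
  then obtain p where p: "p \<in> set (concat (map (\<lambda>u. map (\<lambda>v. Less (digit_pos u) (digit_pos v)) [Suc u..<t]) [0..<t]))"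
    "x \<in> free_vars p" unfolding increasing_digits_def free_vars_Conjs by blast
  then obtain u v where "u < t" "v < t" "p = Less (digit_pos u) (digit_pos v)"
    using increasing_digits_conjunct by blast
  then show "x \<in> set (selector_vars t r)"
    using p(2) tvars_digit_pos[of u t r] tvars_digit_pos[of v t r] by auto
qed

lemma free_vars_selected_bit:
  assumes "0 < t" shows "free_vars (selected_bit t r k W p) \<subseteq> set (selector_vars t r)"
proof
  fix x assume "x \<in> free_vars (selected_bit t r k W p)"
  then obtain i where "x \<in> free_vars (selects t r i)" unfolding selected_bit_def by auto
  then show "x \<in> set (selector_vars t r)" using free_vars_selects[OF assms] by blast
qed

lemma selector_vars_odd: "set (selector_vars t r) \<subseteq> {x. odd x}"
  unfolding selector_vars_def by auto

lemma sentence_selector_sentence: "0 < t \<Longrightarrow> sentence (selector_sentence t r k K n W)"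
proof -
  assume t: "0 < t"
  have "free_vars (match_formula (selected_bit t r k W) K 0 [Window FTrue Max 1 n]) \<subseteq> set (selector_vars t r)"
    by (rule free_vars_match_formula_root) (use free_vars_selected_bit[OF t] in auto)
  moreover have "free_vars (Disjs (map (selects t r) [0..<k])) \<subseteq> set (selector_vars t r)"
    using free_vars_selects[OF t] by auto
  ultimately show ?thesis unfolding sentence_def selector_sentence_def selector_body_def free_vars_Exs
    using free_vars_increasing_digits[of t r] by auto
qed

lemma sat_selects:
  "sat w \<tau> (selects t r i) \<longleftrightarrow> (\<forall>j<r. \<tau> (2*(t+j)+1) = teval w \<tau> (digit_pos (digit t j i)))"
  unfolding selects_def by auto

lemma sat_increasing_digits:
  "sat w \<tau> (increasing_digits t) \<longleftrightarrow>
    (\<forall>u v. u < v \<and> v < t \<longrightarrow> teval w \<tau> (digit_pos u) < teval w \<tau> (digit_pos v))"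
  unfolding increasing_digits_def by (auto simp del: teval.simps)

lemma selects_unique:
  assumes t: "2 \<le> t" and o: "sat w \<tau> (increasing_digits t)"
  and i: "i < t^r" "i' < t^r" and s: "sat w \<tau> (selects t r i)" "sat w \<tau> (selects t r i')"
  shows "i = i'"
proof -
  have "\<forall>j<r. (i div t^j) mod t = (i' div t^j) mod t"
  proof (intro allI impI)
    fix j assume j: "j < r"
    have e: "teval w \<tau> (digit_pos (digit t j i)) = teval w \<tau> (digit_pos (digit t j i'))" using s j
      unfolding sat_selects by metis
    have l: "digit t j i < t" "digit t j i' < t" using t digit_less by auto
    have "digit t j i = digit t j i'"
    proof (rule ccontr)
      assume "digit t j i \<noteq> digit t j i'"
      then consider "digit t j i < digit t j i'" | "digit t j i' < digit t j i" by linarith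
      then show False using o e l unfolding sat_increasing_digits by (cases) (metis less_irrefl)+
    qed
    then show "(i div t^j) mod t = (i' div t^j) mod t" unfolding digit_def .
  qed
  then show ?thesis using digits_eq_imp_eq[OF t i] by blast
qed

lemma selected_bit_odd_vars: "0 < t \<Longrightarrow> \<forall>p. free_vars (selected_bit t r k W p) \<subseteq> {x. odd x}"
  using free_vars_selected_bit selector_vars_odd by blast

lemma sat_selected_bit:
  "sat w \<tau> (selected_bit t r k W p) \<longleftrightarrow> (\<exists>i<k. W i ! (p-1) \<and> sat w \<tau> (selects t r i))"
  unfolding selected_bit_def by auto

lemma sat_selector_body:
  assumes t: "2 \<le> t" and k: "k \<le> t^r" and K: "length w \<le> 3^K"
  and W: "\<forall>i<k. length (W i) = length w"
  and rng: "\<forall>x. \<tau> x \<in> {1..length w}"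
  and o: "sat w \<tau> (increasing_digits t)"
  shows "sat w \<tau> (selector_body t r k K (length w) W) \<longleftrightarrow>
     (\<exists>i<k. sat w \<tau> (selects t r i) \<and> w = W i)"
proof -
  have root: "sat w \<tau> (match_formula (selected_bit t r k W) K 0 [Window FTrue Max 1 (length w)]) \<longleftrightarrow>
     (\<forall>p\<in>{1..length w}. w ! (p-1) = sat w \<tau> (selected_bit t r k W p))"
    by (rule sat_match_formula_root[OF selected_bit_odd_vars rng K]) (use t in simp)
  have unique: "\<And>i i'. i < k \<Longrightarrow> i' < k \<Longrightarrow> sat w \<tau> (selects t r i) \<Longrightarrow> sat w \<tau> (selects t r i') \<Longrightarrow> i = i'"
    using selects_unique[OF t o] k by (meson less_le_trans)
  show ?thesis
  proof
    assume body: "sat w \<tau> (selector_body t r k K (length w) W)"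
    then obtain i where i: "i < k" "sat w \<tau> (selects t r i)" by (auto simp: selector_body_def)
    have tr: "\<forall>p\<in>{1..length w}. w ! (p-1) = sat w \<tau> (selected_bit t r k W p)"
      using body root by (simp add: selector_body_def)
    have "w ! (p - 1) = W i ! (p - 1)" if "p \<in> {1..length w}" for p
    proof -
      have "w ! (p - 1) \<longleftrightarrow> (\<exists>i'<k. W i' ! (p - 1) \<and> sat w \<tau> (selects t r i'))"
        using tr[rule_format, OF that] by (simp only: sat_selected_bit)
      also have "\<dots> \<longleftrightarrow> W i ! (p - 1)" using unique i by blast
      finally show ?thesis by simp
    qed
    moreover have "length (W i) = length w" using W i by simp
    ultimately have "w = W i" using nth_eq_iff_letters_eq by blast
    then show "\<exists>i<k. sat w \<tau> (selects t r i) \<and> w = W i" using i by blast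
  next
    assume "\<exists>i<k. sat w \<tau> (selects t r i) \<and> w = W i"
    then obtain i where i: "i < k" "sat w \<tau> (selects t r i)" "w = W i" by blast
    have tr: "\<forall>p\<in>{1..length w}. w ! (p-1) = sat w \<tau> (selected_bit t r k W p)"
      unfolding sat_selected_bit using unique i by auto
    show "sat w \<tau> (selector_body t r k K (length w) W)"
      using o i tr root by (auto simp: selector_body_def)
  qed
qed

text \<open>The witness for selecting W i: digit v sits at position v + 1 and the j-th digit variable
  points at the position of the j-th digit of i.\<close>

definition selector_assignment :: "nat \<Rightarrow> nat \<Rightarrow> nat \<Rightarrow> nat \<Rightarrow> nat" where
  "selector_assignment t r i x = (if odd x \<and> 3 \<le> x \<and> x < 2*t+1 then (x-1) div 2 + 1
     else if odd x \<and> 2*t+1 \<le> x \<and> x < 2*(t+r)+1 then digit t ((x-1) div 2 - t) i + 1 else 1)"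

lemma selector_assignment_outside:
  assumes "x \<notin> set (selector_vars t r)" shows "selector_assignment t r i x = 1"
proof -
  have a: "\<not> (odd x \<and> 3 \<le> x \<and> x < 2*t+1)"
  proof
    assume h: "odd x \<and> 3 \<le> x \<and> x < 2*t+1"
    define v where "v = (x - 1) div 2"
    have "x = 2*v+1" "1 \<le> v" "v < t" using h unfolding v_def by presburger+
    then show False using pos_var_in_selector_vars[of v t r] assms by simp
  qed
  have b: "\<not> (odd x \<and> 2*t+1 \<le> x \<and> x < 2*(t+r)+1)"
  proof
    assume h: "odd x \<and> 2*t+1 \<le> x \<and> x < 2*(t+r)+1"
    define j where "j = (x - 1) div 2 - t"
    have "x = 2*(t+j)+1" "j < r" using h unfolding j_def by presburger+
    then show False using digit_var_in_selector_vars[of j r t] assms by simp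
  qed
  show ?thesis unfolding selector_assignment_def by (simp only: if_not_P[OF a] if_not_P[OF b])
qed

lemma selector_assignment_range:
  assumes t: "2 \<le> t" shows "1 \<le> selector_assignment t r i x \<and> selector_assignment t r i x \<le> t"
proof -
  have d: "\<And>j. digit t j i < t" using digit_less t by simp
  have h: "odd x \<and> 3 \<le> x \<and> x < 2*t+1 \<Longrightarrow> (x-1) div 2 + 1 \<le> t" by presburger
  consider (a) "odd x \<and> 3 \<le> x \<and> x < 2*t+1"
    | (b) "\<not> (odd x \<and> 3 \<le> x \<and> x < 2*t+1)" "odd x \<and> 2*t+1 \<le> x \<and> x < 2*(t+r)+1"
    | (c) "\<not> (odd x \<and> 3 \<le> x \<and> x < 2*t+1)" "\<not> (odd x \<and> 2*t+1 \<le> x \<and> x < 2*(t+r)+1)" by blast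
  then show ?thesis
  proof cases
    case a
    then have "selector_assignment t r i x = (x-1) div 2 + 1" unfolding selector_assignment_def by simp
    then show ?thesis using h[OF a] by simp
  next
    case b
    have "selector_assignment t r i x = digit t ((x-1) div 2 - t) i + 1"
      unfolding selector_assignment_def by (simp only: if_not_P[OF b(1)] if_P[OF b(2)])
    then show ?thesis using d[of "(x-1) div 2 - t"] by simp
  next
    case c
    have "selector_assignment t r i x = 1" unfolding selector_assignment_def
      by (simp only: if_not_P[OF c(1)] if_not_P[OF c(2)])
    then show ?thesis using t by simp
  qed
qed

lemma teval_digit_pos_selector_assignment:
  assumes "v < t" shows "teval w (selector_assignment t r i) (digit_pos v) = v + 1"
proof (cases "v = 0")
  case True then show ?thesis unfolding digit_pos_def by simp
next
  case False
  have "odd (2*v+1) \<and> 3 \<le> 2*v+1 \<and> 2*v+1 < 2*t+1" using False assms by simp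
  moreover have "(2*v+1-1) div 2 = v" by simp
  ultimately show ?thesis unfolding digit_pos_def selector_assignment_def using False by simp
qed

lemma selector_assignment_digit_var:
  assumes "j < r" "2 \<le> t" shows "selector_assignment t r i (2*(t+j)+1) = digit t j i + 1"
proof -
  have "\<not> (odd (2*(t+j)+1) \<and> 3 \<le> 2*(t+j)+1 \<and> 2*(t+j)+1 < 2*t+1)" by simp
  moreover have "odd (2*(t+j)+1) \<and> 2*t+1 \<le> 2*(t+j)+1 \<and> 2*(t+j)+1 < 2*(t+r)+1" using assms by simp
  moreover have "(2*(t+j)+1-1) div 2 - t = j" by simp
  ultimately show ?thesis unfolding selector_assignment_def by presburger
qed

lemma holds_selector_sentence:
  assumes t: "2 \<le> t" and nt: "t \<le> length w"
  and k: "k \<le> t^r" and K: "length w \<le> 3^K"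
  and W: "\<forall>i<k. length (W i) = length w"
  shows "holds w (selector_sentence t r k K (length w) W) \<longleftrightarrow> (\<exists>i<k. w = W i)"
proof -
  have n1: "1 \<le> length w" using t nt by simp
  have hs: "holds w (selector_sentence t r k K (length w) W) \<longleftrightarrow>
    (\<exists>\<tau>. (\<forall>v. v \<notin> set (selector_vars t r) \<longrightarrow> \<tau> v = 1) \<and> (\<forall>v\<in>set (selector_vars t r). \<tau> v \<in> {1..length w}) \<and>
      sat w \<tau> (selector_body t r k K (length w) W))"
    unfolding holds_def selector_sentence_def sat_Exs by simp
  show ?thesis
  proof
    assume "holds w (selector_sentence t r k K (length w) W)"
    then obtain \<tau> where tau: "\<forall>v. v \<notin> set (selector_vars t r) \<longrightarrow> \<tau> v = 1" "\<forall>v\<in>set (selector_vars t r). \<tau> v \<in> {1..length w}"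
      "sat w \<tau> (selector_body t r k K (length w) W)" using hs by blast
    have rng: "\<forall>x. \<tau> x \<in> {1..length w}" using tau(1,2) n1 by (metis atLeastAtMost_iff order_refl)
    have o: "sat w \<tau> (increasing_digits t)" using tau(3) by (simp add: selector_body_def)
    show "\<exists>i<k. w = W i" using sat_selector_body[OF t k K W rng o] tau(3) by blast
  next
    assume "\<exists>i<k. w = W i"
    then obtain i where i: "i < k" "w = W i" by blast
    define \<tau> where "\<tau> = selector_assignment t r i"
    have r1: "\<forall>v. v \<notin> set (selector_vars t r) \<longrightarrow> \<tau> v = 1" unfolding \<tau>_def
      using selector_assignment_outside by blast
    have rng: "\<forall>x. \<tau> x \<in> {1..length w}" unfolding \<tau>_def using selector_assignment_range[OF t] nt
      by (meson atLeastAtMost_iff le_trans)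
    have Y: "\<And>v. v < t \<Longrightarrow> teval w \<tau> (digit_pos v) = v + 1" unfolding \<tau>_def
      by (rule teval_digit_pos_selector_assignment)
    have o: "sat w \<tau> (increasing_digits t)" unfolding sat_increasing_digits using Y by simp
    have s: "sat w \<tau> (selects t r i)" unfolding sat_selects
    proof (intro allI impI)
      fix j assume j: "j < r"
      have "digit t j i < t" using digit_less t by simp
      then show "\<tau> (2 * (t + j) + 1) = teval w \<tau> (digit_pos (digit t j i))"
        using Y selector_assignment_digit_var[OF j t] unfolding \<tau>_def by simp
    qed
    have "sat w \<tau> (selector_body t r k K (length w) W)"
      using sat_selector_body[OF t k K W rng o] i s by blast
    then show "holds w (selector_sentence t r k K (length w) W)" unfolding hs using r1 rng by blast
  qed
qed

definition const_bit :: "bool list \<Rightarrow> nat \<Rightarrow> fform" where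
  "const_bit u p = (if u ! (p-1) then FTrue else FFalse)"

definition disjunction_sentence :: "nat \<Rightarrow> nat \<Rightarrow> (nat \<Rightarrow> bool list) \<Rightarrow> nat \<Rightarrow> fform" where
  "disjunction_sentence K n W k =
    Disjs (map (\<lambda>i. match_formula (const_bit (W i)) K 0 [Window FTrue Max 1 n]) [0..<k])"

lemma sat_const_bit [simp]: "sat w \<sigma> (const_bit u p) \<longleftrightarrow> u ! (p - 1)"
  by (simp add: const_bit_def)

lemma holds_disjunction_sentence:
  assumes K: "length w \<le> 3^K" and n: "1 \<le> length w"
  and W: "\<forall>i<k. length (W i) = length w"
  shows "holds w (disjunction_sentence K (length w) W k) \<longleftrightarrow> (\<exists>i<k. w = W i)"
proof -
  have rng: "\<forall>x. (\<lambda>_. 1::nat) x \<in> {1..length w}" using n by simp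
  have odd: "\<forall>p. free_vars (const_bit u p) \<subseteq> {x. odd x}" for u unfolding const_bit_def by simp
  have "sat w (\<lambda>_. 1) (match_formula (const_bit (W i)) K 0 [Window FTrue Max 1 (length w)]) \<longleftrightarrow>
     w = W i" if "i < k" for i
    unfolding sat_match_formula_root[OF odd[of "W i"] rng K]
    using nth_eq_iff_letters_eq[of "W i" w] W that by simp
  then show ?thesis unfolding holds_def disjunction_sentence_def by auto
qed

lemma qcount_disjunction_sentence: "qcount (disjunction_sentence K n W k) = k * (3 * (K+1))"
proof -
  have "\<And>i. qcount (match_formula (const_bit (W i)) K 0 [Window FTrue Max 1 n]) = 3 * (K+1)"
    by (rule qcount_match_formula) (auto simp: const_bit_def)
  then show ?thesis unfolding disjunction_sentence_def by (simp add: sum_list_triv o_def)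
qed

lemma sentence_disjunction_sentence: "sentence (disjunction_sentence K n W k)"
proof -
  have "\<And>i. free_vars (match_formula (const_bit (W i)) K 0 [Window FTrue Max 1 n]) \<subseteq> {}"
    by (rule free_vars_match_formula_root) (auto simp: const_bit_def)
  then show ?thesis unfolding sentence_def disjunction_sentence_def by auto
qed

lemma least_power_bounds:
  fixes b m :: nat
  assumes b: "2 \<le> b"
  defines "e \<equiv> LEAST e. m \<le> b ^ e"
  shows "m \<le> b ^ e" "e \<le> m" "real e \<le> log (real b) (real m) + 1"
proof -
  have ex: "m \<le> b ^ m" using power_gt_expt[of b m] b by simp
  show "m \<le> b ^ e" unfolding e_def by (rule LeastI[of _ m]) (rule ex)
  show "e \<le> m" unfolding e_def by (rule Least_le) (rule ex)
  show "real e \<le> log (real b) (real m) + 1"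
  proof (cases "e = 0")
    case True
    have "0 \<le> log (real b) (real m)" using b by (cases "m = 0") (simp_all add: log_def)
    then show ?thesis using True by simp
  next
    case False
    then have "\<not> m \<le> b ^ (e - 1)" unfolding e_def by (intro not_less_Least) simp
    then have "real b ^ (e - 1) < real m" by (metis not_le of_nat_less_iff of_nat_power)
    then have "real (e - 1) < log (real b) (real m)" using b by (intro less_log_of_power) auto
    then show ?thesis using False by simp
  qed
qed

definition defines_words :: "nat \<Rightarrow> fform \<Rightarrow> bool list set \<Rightarrow> bool" where
  "defines_words n \<phi> A \<longleftrightarrow> sentence \<phi> \<and> (\<forall>w. length w = n \<longrightarrow> (holds w \<phi> \<longleftrightarrow> w \<in> A))"

lemma finite_words: "finite {w :: bool list. length w = n}"
  using finite_lists_length_eq[of "UNIV :: bool set" n] by simp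

lemma card_words_le:
  assumes "A \<subseteq> {w :: bool list. length w = n}"
  shows "card A \<le> 2 ^ n"
proof -
  have "card {w :: bool list. length w = n} = 2 ^ n"
    using card_lists_length_eq[of "UNIV :: bool set" n] by (simp add: card_UNIV_bool)
  then show ?thesis using card_mono[OF finite_words assms] by simp
qed

lemma obtain_word_enumeration:
  assumes "A \<subseteq> {w :: bool list. length w = n}"
  obtains W where "\<And>w. w \<in> A \<longleftrightarrow> (\<exists>i<card A. w = W i)" and "\<And>i. i < card A \<Longrightarrow> length (W i) = n"
proof -
  have "finite A" using assms finite_words finite_subset by blast
  then obtain W where W: "bij_betw W {0..<card A} A" using ex_bij_betw_nat_finite by blast
  show thesis
  proof (rule that)
    show "w \<in> A \<longleftrightarrow> (\<exists>i<card A. w = W i)" for w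
    proof
      assume "w \<in> A"
      then obtain i where "i \<in> {0..<card A}" "w = W i" using bij_betw_imp_surj_on[OF W] by blast
      then show "\<exists>i<card A. w = W i" by auto
    qed (use bij_betwE[OF W] in auto)
    show "length (W i) = n" if "i < card A" for i using bij_betwE[OF W] that assms by auto
  qed
qed

lemma exists_selector_sentence:
  assumes t: "2 \<le> t" and n: "t \<le> n" and A: "A \<subseteq> {w. length w = n}"
  shows "\<exists>\<phi>. defines_words n \<phi> A \<and>
    real (qcount \<phi>) \<le> 3 * log 3 (real n) + log (real t) (real (card A)) + real t + 6"
proof -
  obtain W where memA: "\<And>w. w \<in> A \<longleftrightarrow> (\<exists>i<card A. w = W i)"
    and W: "\<And>i. i < card A \<Longrightarrow> length (W i) = n"
    using obtain_word_enumeration[OF A] by blast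
  define K where "K = (LEAST e. n \<le> 3 ^ e)"
  define r where "r = (LEAST e. card A \<le> t ^ e)"
  have K: "n \<le> 3 ^ K" "real K \<le> log 3 (real n) + 1"
    using least_power_bounds[of 3 n] unfolding K_def by auto
  have r: "card A \<le> t ^ r" "real r \<le> log (real t) (real (card A)) + 1"
    using least_power_bounds[OF t, of "card A"] unfolding r_def by auto
  let ?\<phi> = "selector_sentence t r (card A) K n W"
  have "holds w ?\<phi> \<longleftrightarrow> w \<in> A" if "length w = n" for w
    using holds_selector_sentence[OF t, of w "card A" r K W] memA W that n r(1) K(1) by auto
  then have "defines_words n ?\<phi> A"
    unfolding defines_words_def using sentence_selector_sentence t by simp
  moreover have "real (qcount ?\<phi>) = real t - 1 + real r + 3 * (real K + 1)"
    using t by (simp add: qcount_selector_sentence)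
  ultimately show ?thesis using K(2) r(2) by (intro exI[of _ ?\<phi>]) auto
qed

lemma exists_disjunction_sentence:
  assumes n: "1 \<le> n" and A: "A \<subseteq> {w. length w = n}"
  shows "\<exists>\<phi>. defines_words n \<phi> A \<and> qcount \<phi> \<le> card A * (3 * (n + 1))"
proof -
  obtain W where memA: "\<And>w. w \<in> A \<longleftrightarrow> (\<exists>i<card A. w = W i)"
    and W: "\<And>i. i < card A \<Longrightarrow> length (W i) = n"
    using obtain_word_enumeration[OF A] by blast
  define K where "K = (LEAST e. n \<le> 3 ^ e)"
  have K: "n \<le> 3 ^ K" "K \<le> n" using least_power_bounds[of 3 n] unfolding K_def by auto
  let ?\<phi> = "disjunction_sentence K n W (card A)"
  have "holds w ?\<phi> \<longleftrightarrow> w \<in> A" if "length w = n" for w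
    using holds_disjunction_sentence[of w K "card A" W] memA W that n K(1) by auto
  then have "defines_words n ?\<phi> A"
    unfolding defines_words_def using sentence_disjunction_sentence by simp
  moreover have "qcount ?\<phi> \<le> card A * (3 * (n + 1))"
    using K(2) by (simp add: qcount_disjunction_sentence)
  ultimately show ?thesis by blast
qed

lemma exists_defining_sentence:
  assumes t: "2 \<le> t" and n: "1 \<le> n" and A: "A \<subseteq> {w. length w = n}"
  shows "\<exists>\<phi>. defines_words n \<phi> A \<and> real (qcount \<phi>) \<le>
    3 * log 3 (real n) + log (real t) (real (card A)) + (real (2 ^ t * (3 * (t + 1))) + real t + 6)"
proof (cases "t \<le> n")
  case True
  then obtain \<phi> where \<phi>: "defines_words n \<phi> A"
    and q: "real (qcount \<phi>) \<le> 3 * log 3 (real n) + log (real t) (real (card A)) + real t + 6"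
    using exists_selector_sentence[OF t True A] by blast
  have "3 * log 3 (real n) + log (real t) (real (card A)) + real t + 6 \<le>
    3 * log 3 (real n) + log (real t) (real (card A)) + (real (2 ^ t * (3 * (t + 1))) + real t + 6)"
    by simp
  then show ?thesis using \<phi> order_trans[OF q] by blast
next
  case False
  have "card A \<le> 2 ^ t"
    using card_words_le[OF A] False by (meson le_trans nat_le_linear one_le_numeral power_increasing)
  then have "card A * (3 * (n + 1)) \<le> 2 ^ t * (3 * (t + 1))" using False by (intro mult_mono) auto
  moreover obtain \<phi> where "defines_words n \<phi> A" "qcount \<phi> \<le> card A * (3 * (n + 1))"
    using exists_disjunction_sentence[OF n A] by blast
  ultimately have "defines_words n \<phi> A" "real (qcount \<phi>) \<le> real (2 ^ t * (3 * (t + 1)))"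
    by (simp_all only: of_nat_le_iff)
  moreover have "0 \<le> log 3 (real n)" using n by simp
  moreover have "0 \<le> log (real t) (real (card A))"
    using t by (cases "card A = 0") (simp_all add: log_def)
  ultimately show ?thesis by (intro exI[of _ \<phi>]) auto
qed

theorem mainTheorem17:
  fixes t :: nat and f :: "nat \<Rightarrow> nat"
  assumes "t \<ge> 2"
    and "filterlim f at_top at_top"
  shows "\<exists>C::real. \<forall>n::nat. n \<ge> 1 \<longrightarrow>
           (\<forall>A :: bool list set. A \<subseteq> {w. length w = n} \<and> card A = f n \<longrightarrow>
              (\<exists>\<phi>. sentence \<phi> \<and>
                   real (qcount \<phi>) \<le> 3 * log 3 (real n) + log (real t) (real (f n)) + C \<and>
                   (\<forall>w. length w = n \<longrightarrow> (holds w \<phi> \<longleftrightarrow> w \<in> A))))"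
proof (intro exI[of _ "real (2 ^ t * (3 * (t + 1))) + real t + 6"] allI impI)
  fix n :: nat and A :: "bool list set"
  assume "1 \<le> n" and "A \<subseteq> {w. length w = n} \<and> card A = f n"
  then show "\<exists>\<phi>. sentence \<phi> \<and>
      real (qcount \<phi>) \<le> 3 * log 3 (real n) + log (real t) (real (f n)) +
        (real (2 ^ t * (3 * (t + 1))) + real t + 6) \<and>
      (\<forall>w. length w = n \<longrightarrow> (holds w \<phi> \<longleftrightarrow> w \<in> A))"
    using exists_defining_sentence[OF assms(1), of n A] unfolding defines_words_def by auto
qed

end
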